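(* Let $k\ge2$, let $p$ be a probability distribution on $\Delta_k$ and $q$ a probability distribution on $\{e_1,\dots,e_k\}$, and let $\gamma\in\Gamma(p,q)$ be an optimal coupling for the cost $c(x,y)=\|x-y\|_1$. For $i\ne j$ define $$B_{ij}:=\max\Big\{0,\ \min\{b\in\mathbb R:\ \gamma(\{x\in\Delta_k:x^\top v_{ij}\le b-1\}\times\{e_i\})=q(e_i)\}\Big\},$$ and $A_i:=\bigcap_{j\ne i}\{x\in\mathbb D^k:x^\top v_{ij}\ge B_{ij}-1\}$. Then $\bigcap_{i\in[k]}A_i\neq\emptyset$.
   Context: $\Delta_k=\{x\in\mathbb R^k:x\ge0,\sum_ix_i=1\}$ with vertices $e_1,\dots,e_k$ (standard basis of $\mathbb R^k$). $\mathbb D^k:=\{x\in\mathbb R^k:\sum_ix_i=1\}$ is the affine hyperplane containing $\Delta_k$. $v_{ij}:=e_j-e_i$, so $x^\top v_{ij}=x_j-x_i$. $\Gamma(p,q)$ is the set of couplings of $p$ and $q$; $\gamma$ is optimal if it minimizes $\int\|x-y\|_1\,d\gamma(x,y)$ over $\Gamma(p,q)$. (The minimum in the definition of $B_{ij}$ exists since the set of such $b$ is a nonempty closed half-line.) *)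

theory Defs
  imports "HOL-Probability.Probability"
begin

text \<open>Points of R^k are vectors real^'n with index type 'n, k = CARD('n).\<close>

definition std_simplex :: "(real^'n::finite) set" where
  "std_simplex = {x. (\<forall>i. 0 \<le> x $ i) \<and> (\<Sum>i\<in>UNIV. x $ i) = 1}"

definition hyperplane_D :: "(real^'n::finite) set" where
  "hyperplane_D = {x. (\<Sum>i\<in>UNIV. x $ i) = 1}"

definition vertex :: "'n::finite \<Rightarrow> real^'n" where
  "vertex i = axis i 1"

definition l1_cost :: "(real^'n::finite) \<Rightarrow> real^'n \<Rightarrow> real" where
  "l1_cost x y = (\<Sum>i\<in>UNIV. \<bar>x $ i - y $ i\<bar>)"

definition is_coupling ::
  "(real^'n::finite) measure \<Rightarrow> (real^'n) measure \<Rightarrow> ((real^'n) \<times> (real^'n)) measure \<Rightarrow> bool" where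
  "is_coupling p q \<gamma> \<longleftrightarrow> prob_space \<gamma> \<and> sets \<gamma> = sets (borel \<Otimes>\<^sub>M borel)
     \<and> distr \<gamma> borel fst = p \<and> distr \<gamma> borel snd = q"

definition optimal_coupling ::
  "(real^'n::finite) measure \<Rightarrow> (real^'n) measure \<Rightarrow> ((real^'n) \<times> (real^'n)) measure \<Rightarrow> bool" where
  "optimal_coupling p q \<gamma> \<longleftrightarrow> is_coupling p q \<gamma> \<and>
     (\<forall>\<gamma>'. is_coupling p q \<gamma>' \<longrightarrow>
        (\<integral>\<^sup>+ z. ennreal (l1_cost (fst z) (snd z)) \<partial>\<gamma>) \<le> (\<integral>\<^sup>+ z. ennreal (l1_cost (fst z) (snd z)) \<partial>\<gamma>'))"

text \<open>B_ij = max{0, min{b. gamma({x in std_simplex. x_j - x_i <= b - 1} x {e_i}) = q(e_i)}};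
  the minimum is taken as an infimum in the extended reals (it is -infinity only when the
  set is all of R, in which case B_ij = 0).\<close>
definition B_thr ::
  "((real^'n::finite) \<times> (real^'n)) measure \<Rightarrow> (real^'n) measure \<Rightarrow> 'n \<Rightarrow> 'n \<Rightarrow> real" where
  "B_thr \<gamma> q i j = real_of_ereal (max 0 (Inf (ereal ` {b::real.
      measure \<gamma> ({x \<in> std_simplex. x $ j - x $ i \<le> b - 1} \<times> {vertex i}) = measure q {vertex i}})))"

definition A_set ::
  "((real^'n::finite) \<times> (real^'n)) measure \<Rightarrow> (real^'n) measure \<Rightarrow> 'n \<Rightarrow> (real^'n) set" where
  "A_set \<gamma> q i = (\<Inter>j\<in>UNIV - {i}. {x \<in> hyperplane_D. x $ j - x $ i \<ge> B_thr \<gamma> q i j - 1})"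

end

theory Submission
  imports Defs
begin

text \<open>
  Put \<open>c i j = B_ij - 1\<close> for \<open>i \<noteq> j\<close>. A point \<open>x \<in> \<bbbD>\<^sup>k\<close> lies in every \<open>A_i\<close> iff
  \<open>x_j - x_i \<ge> c i j\<close> for all \<open>i \<noteq> j\<close>, i.e. iff \<open>-x\<close> is a potential for \<open>c\<close>, and a potential
  exists as soon as no cycle has positive \<open>c\<close>-weight. On the vertices charged by \<open>q\<close> this is
  forced by optimality: since \<open>\<parallel>x - e_i\<parallel>\<^sub>1 = 2 - 2 x_i\<close> on the simplex, along a cycle
  \<open>i_1 \<rightarrow> \<dots> \<rightarrow> i_m\<close> of positive weight one can take an equal small mass \<open>\<delta>\<close> from the points
  sent to \<open>e_(i_l)\<close> whose gap \<open>x_(i_(l+1)) - x_(i_l)\<close> is nearly \<open>B - 1\<close> and send it to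
  \<open>e_(i_(l+1))\<close> instead. The marginals are unchanged and the cost drops by about
  \<open>2\<delta>\<close> times the cycle weight. A vertex without \<open>q\<close>-mass has \<open>B_jb = 0\<close>, and
  \<open>B_aj \<le> B_ab + 1\<close> makes it a shortcut, so it can be added to the potential afterwards.
\<close>

fun walk_weight :: "('a \<Rightarrow> 'a \<Rightarrow> real) \<Rightarrow> 'a list \<Rightarrow> real" where
  "walk_weight c (a # b # xs) = c a b + walk_weight c (b # xs)"
| "walk_weight c _ = 0"

lemma walk_weight_append: "walk_weight c (xs @ [y] @ ys) = walk_weight c (xs @ [y]) + walk_weight c (y # ys)"
proof (induction xs)
  case Nil then show ?case by (cases ys) auto
next
  case (Cons a xs) then show ?case by (cases xs) auto
qed

lemma walk_weight_le_length: 
  assumes "\<And>a b. c a b \<le> M" "0 \<le> M"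
  shows "walk_weight c w \<le> real (length w) * M"
proof (induction w)
  case (Cons a xs) then show ?case using assms(1)[of a "hd xs"] assms(2) by (cases xs) (auto simp: algebra_simps)
qed (use assms in auto)

lemma walk_weight_cong: "(\<And>a b. a \<in> set w \<Longrightarrow> b \<in> set w \<Longrightarrow> c a b = d a b) \<Longrightarrow> walk_weight c w = walk_weight d w"
proof (induction w)
  case (Cons a xs) then show ?case by (cases xs) auto
qed auto

definition nonpos_cycles :: "('a \<Rightarrow> 'a \<Rightarrow> real) \<Rightarrow> 'a set \<Rightarrow> bool" where
  "nonpos_cycles c V \<longleftrightarrow> (\<forall>vs. distinct vs \<and> set vs \<subseteq> V \<and> vs \<noteq> [] \<longrightarrow> walk_weight c (vs @ [hd vs]) \<le> 0)"

lemma closed_walk_weight_nonpos: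
  assumes "nonpos_cycles c V"
  shows "set w \<subseteq> V \<Longrightarrow> w \<noteq> [] \<Longrightarrow> walk_weight c (w @ [hd w]) \<le> 0"
proof (induction "length w" arbitrary: w rule: less_induct)
  case less
  show ?case
  proof (cases "distinct w")
    case True then show ?thesis using assms less.prems unfolding nonpos_cycles_def by blast
  next
    case False
    then obtain xs ys zs y where w: "w = xs@[y]@ys@[y]@zs" using not_distinct_decomp by blast
    define w' where "w' = xs @ [y] @ zs"
    have hd: "hd w' = hd w" by (cases xs) (auto simp: w w'_def)
    have "walk_weight c (w @ [hd w]) = walk_weight c (xs @ [y]) + walk_weight c (y # ys @ [y] @ zs @ [hd w])"
      using walk_weight_append[of c xs y "ys @ [y] @ zs @ [hd w]"] by (simp add: w)
    also have "walk_weight c (y # ys @ [y] @ zs @ [hd w]) = walk_weight c ((y#ys) @ [hd (y#ys)]) + walk_weight c (y # zs @ [hd w])"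
      using walk_weight_append[of c "y#ys" y "zs @ [hd w]"] by simp
    also have "walk_weight c ((y#ys) @ [hd (y#ys)]) \<le> 0"
      using less.hyps[of "y#ys"] less.prems by (auto simp: w)
    also have "walk_weight c (xs @ [y]) + (0 + walk_weight c (y # zs @ [hd w])) = walk_weight c (w' @ [hd w])"
      using walk_weight_append[of c xs y "zs @ [hd w]"] by (simp add: w'_def)
    also have "\<dots> = walk_weight c (w' @ [hd w'])" by (simp add: hd)
    also have "\<dots> \<le> 0" using less.hyps[of w'] less.prems by (auto simp: w w'_def)
    finally show ?thesis by simp
  qed
qed

lemma walk_weight_bounded:
  assumes "nonpos_cycles c V" "finite V"
  defines "M \<equiv> (\<Sum>a\<in>V. \<Sum>b\<in>V. \<bar>c a b\<bar>)"
  shows "set w \<subseteq> V \<Longrightarrow> walk_weight c w \<le> real (card V) * M"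
proof (induction "length w" arbitrary: w rule: less_induct)
  case less
  have M0: "0 \<le> M" unfolding M_def by (simp add: sum_nonneg)
  have cM: "c a b \<le> M" if "a \<in> V" "b \<in> V" for a b
  proof -
    have "c a b \<le> \<bar>c a b\<bar>" by simp
    also have "\<dots> \<le> (\<Sum>b\<in>V. \<bar>c a b\<bar>)" using that assms(2) by (intro member_le_sum) auto
    also have "\<dots> \<le> M" unfolding M_def using that assms(2) by (intro member_le_sum[of a V "\<lambda>a. \<Sum>b\<in>V. \<bar>c a b\<bar>"]) (auto intro: sum_nonneg)
    finally show ?thesis .
  qed
  show ?case
  proof (cases "distinct w")
    case True
    define c' where "c' a b = (if a \<in> V \<and> b \<in> V then c a b else 0)" for a b
    have "walk_weight c w = walk_weight c' w" using less.prems
      by (intro walk_weight_cong) (auto simp: c'_def)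
    also have "\<dots> \<le> real (length w) * M" by (rule walk_weight_le_length) (use cM M0 in \<open>auto simp: c'_def\<close>)
    also have "length w \<le> card V" using True less.prems assms(2) by (metis card_mono distinct_card)
    then have "real (length w) * M \<le> real (card V) * M" using M0 by (intro mult_right_mono) auto
    finally show ?thesis .
  next
    case False
    then obtain xs ys zs y where w: "w = xs@[y]@ys@[y]@zs" using not_distinct_decomp by blast
    have "walk_weight c w = walk_weight c (xs @ [y]) + walk_weight c (y # ys @ [y] @ zs)"
      using walk_weight_append[of c xs y "ys @ [y] @ zs"] by (simp add: w)
    also have "walk_weight c (y # ys @ [y] @ zs) = walk_weight c ((y#ys) @ [hd (y#ys)]) + walk_weight c (y # zs)"
      using walk_weight_append[of c "y#ys" y "zs"] by simp
    also have "walk_weight c ((y#ys) @ [hd (y#ys)]) \<le> 0"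
      using closed_walk_weight_nonpos[OF assms(1), of "y#ys"] less.prems by (auto simp: w)
    also have "walk_weight c (xs @ [y]) + (0 + walk_weight c (y # zs)) = walk_weight c (xs @ [y] @ zs)"
      using walk_weight_append[of c xs y zs] by simp
    also have "\<dots> \<le> real (card V) * M" using less.hyps[of "xs @ [y] @ zs"] less.prems by (auto simp: w)
    finally show ?thesis by simp
  qed
qed

lemma nonpos_cycles_potential:
  assumes "nonpos_cycles c V" "finite V"
  shows "\<exists>u. \<forall>i\<in>V. \<forall>j\<in>V. c i j \<le> u i - u j"
proof -
  \<comment> \<open>\<open>u i\<close> is the largest weight of a walk from \<open>i\<close>; it is finite because cycles can be cut out.\<close>
  define K where "K = real (card V) * (\<Sum>a\<in>V. \<Sum>b\<in>V. \<bar>c a b\<bar>)"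
  define u where "u i = Sup ((\<lambda>w. walk_weight c (i # w)) ` {w. set w \<subseteq> V})" for i
  have bdd: "bdd_above ((\<lambda>w. walk_weight c (i # w)) ` {w. set w \<subseteq> V})" if "i \<in> V" for i
    using walk_weight_bounded[OF assms, of "i # _"] that unfolding K_def[symmetric]
    by (intro bdd_aboveI[of _ K]) auto
  show ?thesis
  proof (intro exI ballI)
    fix i j assume ij: "i \<in> V" "j \<in> V"
    have "u j \<le> u i - c i j" unfolding u_def
    proof (rule cSUP_least)
      have "[] \<in> {w. set w \<subseteq> V}" by simp
      then show "{w. set w \<subseteq> V} \<noteq> {}" by blast
      fix w assume w: "w \<in> {w. set w \<subseteq> V}"
      have "walk_weight c (i # j # w) \<le> u i" unfolding u_def
        by (rule cSUP_upper[OF _ bdd[OF ij(1)]]) (use w ij in auto)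
      then show "walk_weight c (j # w) \<le> Sup ((\<lambda>w. walk_weight c (i # w)) ` {w. set w \<subseteq> V}) - c i j"
        by (simp add: u_def)
    qed
    then show "c i j \<le> u i - u j" by simp
  qed
qed

lemma potential_extend:
  fixes c :: "'a \<Rightarrow> 'a \<Rightarrow> real" and u :: "'a \<Rightarrow> real"
  assumes fin: "finite S" and feas: "\<forall>i\<in>T. \<forall>j\<in>T. c i j \<le> u i - u j" and "T \<noteq> {}" "finite T"
    and tri: "\<And>j a b. j \<in> S \<Longrightarrow> c a j + c j b \<le> c a b" and diag: "\<And>a. c a a = 0"
  shows "\<exists>u. \<forall>i\<in>T \<union> S. \<forall>j\<in>T \<union> S. c i j \<le> u i - u j"
  using fin tri
proof (induction S rule: finite_induct)
  case empty then show ?case using feas by auto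
next
  case (insert j S)
  then obtain u where u: "\<forall>i\<in>T \<union> S. \<forall>k\<in>T \<union> S. c i k \<le> u i - u k" by auto
  show ?case
  proof (cases "j \<in> T")
    case True then show ?thesis using u diag by (intro exI[of _ u]) auto
  next
    case False
    let ?R = "T \<union> S"
    \<comment> \<open>The new vertex \<open>j\<close> gets the largest value allowed by the edges into \<open>j\<close>; edges out of
      \<open>j\<close> are then handled by the triangle inequality through \<open>j\<close>.\<close>
    have finR: "finite ?R" "?R \<noteq> {}" using insert assms by auto
    define m where "m = Min ((\<lambda>a. u a - c a j) ` ?R)"
    define u' where "u' = u(j := m)"
    have jR: "j \<notin> ?R" using False insert by auto
    have m_le: "m \<le> u a - c a j" if "a \<in> ?R" for a unfolding m_def using finR that by auto
    have "m \<in> (\<lambda>a. u a - c a j) ` ?R"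
      unfolding m_def using finR by (intro Min_in) auto
    then obtain a0 where a0: "a0 \<in> ?R" "m = u a0 - c a0 j" by auto
    show ?thesis
    proof (intro exI[of _ u'] ballI)
      fix a b assume ab: "a \<in> T \<union> insert j S" "b \<in> T \<union> insert j S"
      show "c a b \<le> u' a - u' b"
      proof (cases "a = j")
        case aj: True
        show ?thesis
        proof (cases "b = j")
          case True then show ?thesis using aj diag by simp
        next
          case False
          then have b: "b \<in> ?R" using ab by auto
          have "c a0 j + c j b \<le> c a0 b" using insert.prems[of j a0 b] by auto
          also have "\<dots> \<le> u a0 - u b" using u a0 b by auto
          finally show ?thesis using aj False a0 by (simp add: u'_def)
        qed
      next
        case anj: False
        then have a: "a \<in> ?R" using ab by auto
        show ?thesis
        proof (cases "b = j")
          case True then show ?thesis using m_le[OF a] anj by (simp add: u'_def)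
        next
          case False then show ?thesis using u a ab anj jR by (auto simp: u'_def)
        qed
      qed
    qed
  qed
qed

lemma potential_exists:
  fixes c :: "'n::finite \<Rightarrow> 'n \<Rightarrow> real"
  assumes "nonpos_cycles c V" "V \<noteq> {}"
    and tri: "\<And>j a b. j \<notin> V \<Longrightarrow> c a j + c j b \<le> c a b" and diag: "\<And>a. c a a = 0"
  shows "\<exists>u. \<forall>i j. c i j \<le> u i - u j"
proof -
  obtain u where "\<forall>i\<in>V. \<forall>j\<in>V. c i j \<le> u i - u j" using nonpos_cycles_potential[OF assms(1)] by auto
  from potential_extend[OF _ this assms(2) _ _ diag, of "UNIV - V"] tri
  obtain u where "\<forall>i\<in>V \<union> (UNIV - V). \<forall>j\<in>V \<union> (UNIV - V). c i j \<le> u i - u j" by auto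
  then show ?thesis by auto
qed

lemma walk_weight_snoc: "walk_weight c (vs @ [z]) = (\<Sum>l<length vs. c (vs!l) ((vs@[z])!Suc l))"
proof (induction vs)
  case Nil then show ?case by simp
next
  case (Cons a vs)
  show ?case
  proof (cases vs)
    case Nil then show ?thesis by simp
  next
    case (Cons b ws)
    have "walk_weight c ((a # vs) @ [z]) = c a b + walk_weight c (vs @ [z])" by (simp add: Cons)
    also have "\<dots> = c a b + (\<Sum>l<length vs. c (vs!l) ((vs@[z])!Suc l))" using Cons.IH by simp
    also have "\<dots> = (\<Sum>l<length (a#vs). c ((a#vs)!l) (((a#vs)@[z])!Suc l))"
      by (simp only: length_Cons sum.lessThan_Suc_shift) (simp add: Cons)
    finally show ?thesis .
  qed
qed

lemma walk_weight_cycle: assumes "vs \<noteq> []"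
  shows "walk_weight c (vs @ [hd vs]) = (\<Sum>l<length vs. c (vs!l) (vs!(Suc l mod length vs)))"
  unfolding walk_weight_snoc
proof (intro sum.cong refl)
  fix l assume "l \<in> {..<length vs}"
  then show "c (vs ! l) ((vs @ [hd vs]) ! Suc l) = c (vs ! l) (vs ! (Suc l mod length vs))"
    using assms by (cases "Suc l = length vs") (auto simp: nth_append hd_conv_nth)
qed

lemma threshold_props:
  fixes X :: "real set"
  assumes up: "\<And>b b'. b \<in> X \<Longrightarrow> b \<le> b' \<Longrightarrow> b' \<in> X" and two: "2 \<in> X"
  defines "B \<equiv> real_of_ereal (max 0 (Inf (ereal ` X)))"
  shows "0 \<le> B" "B \<le> 2" "0 < B \<Longrightarrow> b < B \<Longrightarrow> b \<notin> X" "B < b \<Longrightarrow> b \<in> X"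
proof -
  let ?I = "Inf (ereal ` X)"
  have I2: "?I \<le> 2" using two by (intro Inf_lower2[of 2]) auto
  have fin: "max 0 ?I = ereal B" using I2 unfolding B_def
    by (cases ?I) (auto simp: max_def)
  have B0: "ereal B \<ge> 0" using fin by (metis max.cobounded1)
  then show "0 \<le> B" by simp
  have "max 0 ?I \<le> 2" using I2 by simp
  then have "ereal B \<le> 2" using fin by simp
  then show "B \<le> 2" by simp
  show "b \<notin> X" if "0 < B" "b < B"
  proof
    assume "b \<in> X"
    then have "?I \<le> ereal b" by (intro Inf_lower) auto
    moreover have "max 0 ?I = ?I"
    proof (rule ccontr)
      assume "max 0 ?I \<noteq> ?I"
      then have "max 0 ?I = 0" by (metis max_def)
      then show False using fin \<open>0 < B\<close> by simp
    qed
    ultimately have "ereal B \<le> ereal b" using fin by simp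
    then show False using \<open>b < B\<close> by simp
  qed
  assume "B < b"
  moreover have "?I \<le> ereal B" using fin by (metis max.cobounded2)
  ultimately have "?I < ereal b" by (metis ereal_less_eq(3) order.strict_trans1 order_less_le)
  then obtain x where "x \<in> X" "ereal x < ereal b" by (auto simp: Inf_less_iff)
  then show "b \<in> X" using up[of x b] by auto
qed

lemma sum_weighted_indicators_le_1:
  fixes m :: nat
  assumes disj: "disjoint_family_on F {..<m}" and r: "\<And>l. l < m \<Longrightarrow> 0 \<le> r l \<and> r l \<le> 1"
  shows "(\<Sum>l<m. ennreal (r l * indicator (F l) z)) \<le> 1"
proof (cases "\<exists>l<m. z \<in> F l")
  case True
  then obtain l where l: "l < m" "z \<in> F l" by auto
  have "(\<Sum>l'<m. ennreal (r l' * indicator (F l') z)) = (\<Sum>l'\<in>{l}. ennreal (r l' * indicator (F l') z))"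
    using l disj finite_lessThan[of m]
    by (intro sum.mono_neutral_right) (auto simp: disjoint_family_on_def indicator_def)
  then show ?thesis using r[OF l(1)] l by simp
qed simp

text \<open>\<open>mixture M m W P N\<close> is \<open>\<Sum>n\<le>m\<close> of the image of the measure with density \<open>W n\<close> w.r.t. \<open>M\<close> under \<open>P n\<close>.\<close>
definition mixture ::
  "'a measure \<Rightarrow> nat \<Rightarrow> (nat \<Rightarrow> 'a \<Rightarrow> ennreal) \<Rightarrow> (nat \<Rightarrow> 'a \<Rightarrow> 'b) \<Rightarrow> 'b measure \<Rightarrow> 'b measure" where
  "mixture M m W P N =
     distr (density (M \<Otimes>\<^sub>M count_space {..m}) (\<lambda>(x, n). W n x)) N (\<lambda>(x, n). P n x)"

lemma sets_mixture [simp]: "sets (mixture M m W P N) = sets N"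
  by (simp add: mixture_def)

lemma nn_integral_mixture:
  assumes W: "\<And>n. W n \<in> borel_measurable M" and P: "\<And>n. P n \<in> measurable M N"
    and f: "f \<in> borel_measurable N"
  shows "(\<integral>\<^sup>+ y. f y \<partial>mixture M m W P N) = (\<Sum>n\<le>m. \<integral>\<^sup>+ x. W n x * f (P n x) \<partial>M)"
proof -
  let ?C = "count_space {..m}"
  interpret C: sigma_finite_measure ?C by (rule sigma_finite_measure_count_space_finite) simp
  have [measurable]: "(\<lambda>(x, n). W n x) \<in> borel_measurable (M \<Otimes>\<^sub>M ?C)"
    using measurable_compose_countable'[where I="{..m}", OF measurable_compose[OF measurable_fst W] measurable_snd]
    by (simp add: case_prod_beta')
  have [measurable]: "(\<lambda>(x, n). P n x) \<in> measurable (M \<Otimes>\<^sub>M ?C) N"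
    using measurable_compose_countable'[where I="{..m}", OF measurable_compose[OF measurable_fst P] measurable_snd]
    by (simp add: case_prod_beta')
  note f[measurable]
  have "(\<integral>\<^sup>+ y. f y \<partial>mixture M m W P N) = (\<integral>\<^sup>+ (x, n). W n x * f (P n x) \<partial>(M \<Otimes>\<^sub>M ?C))"
    unfolding mixture_def
    by (simp add: nn_integral_distr nn_integral_density case_prod_beta')
  also have "\<dots> = (\<integral>\<^sup>+ x. \<integral>\<^sup>+ n. W n x * f (P n x) \<partial>?C \<partial>M)"
    by (subst C.nn_integral_fst[symmetric]) (auto simp: case_prod_beta')
  also have "\<dots> = (\<Sum>n\<le>m. \<integral>\<^sup>+ x. W n x * f (P n x) \<partial>M)"
    using W P by (simp add: nn_integral_count_space_finite nn_integral_sum)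
  finally show ?thesis .
qed

lemma sum_lessThan_rotate: "(\<Sum>l<m. h (Suc l mod m)) = (\<Sum>l<(m::nat). h l)"
proof (cases m)
  case (Suc m')
  have "(\<Sum>l<m. h (Suc l mod m)) = (\<Sum>l<m'. h (Suc l)) + h 0"
    by (simp add: Suc)
  also have "\<dots> = (\<Sum>l<m. h l)"
    by (simp only: Suc sum.lessThan_Suc_shift add.commute)
  finally show ?thesis .
qed simp

text \<open>The fraction \<open>w l z\<close> of the mass at \<open>z = (x, b l)\<close> is moved to \<open>(x, b ((l + 1) mod m))\<close>.\<close>
definition cyclic_transfer ::
  "('a::topological_space \<times> 'b::topological_space) measure \<Rightarrow> nat \<Rightarrow> (nat \<Rightarrow> 'a \<times> 'b \<Rightarrow> ennreal)
     \<Rightarrow> (nat \<Rightarrow> 'b) \<Rightarrow> ('a \<times> 'b) measure" where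
  "cyclic_transfer \<gamma> m w b = mixture \<gamma> m
     (\<lambda>n z. if n = 0 then 1 - (\<Sum>l<m. w l z) else w (n - 1) z)
     (\<lambda>n z. if n = 0 then z else (fst z, b (n mod m))) (borel \<Otimes>\<^sub>M borel)"

lemma sets_cyclic_transfer [simp]: "sets (cyclic_transfer \<gamma> m w b) = sets (borel \<Otimes>\<^sub>M borel)"
  by (simp add: cyclic_transfer_def)

lemma nn_integral_cyclic_transfer:
  assumes sets: "sets \<gamma> = sets (borel \<Otimes>\<^sub>M borel)"
    and w: "\<And>l. w l \<in> borel_measurable \<gamma>" and w_le: "\<And>z. (\<Sum>l<m. w l z) \<le> 1"
    and f: "f \<in> borel_measurable (borel \<Otimes>\<^sub>M borel)"
  shows "(\<integral>\<^sup>+ z. f z \<partial>cyclic_transfer \<gamma> m w b) + (\<Sum>l<m. \<integral>\<^sup>+ z. w l z * f z \<partial>\<gamma>)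
       = (\<integral>\<^sup>+ z. f z \<partial>\<gamma>) + (\<Sum>l<m. \<integral>\<^sup>+ z. w l z * f (fst z, b (Suc l mod m)) \<partial>\<gamma>)"
proof -
  note w[measurable]
  have [measurable]: "f \<in> borel_measurable \<gamma>" using f by (simp add: measurable_cong_sets[OF sets refl])
  have [measurable]: "(\<lambda>z. (fst z, c)) \<in> measurable \<gamma> (borel \<Otimes>\<^sub>M borel)" for c
    unfolding measurable_cong_sets[OF sets refl] by measurable
  let ?W0 = "\<integral>\<^sup>+ z. (1 - (\<Sum>l<m. w l z)) * f z \<partial>\<gamma>"
  have "(\<integral>\<^sup>+ z. f z \<partial>cyclic_transfer \<gamma> m w b)
      = ?W0 + (\<Sum>l<m. \<integral>\<^sup>+ z. w l z * f (fst z, b (Suc l mod m)) \<partial>\<gamma>)"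
    unfolding cyclic_transfer_def
  proof (subst nn_integral_mixture)
    show "(\<lambda>z. if n = 0 then 1 - (\<Sum>l<m. w l z) else w (n - 1) z) \<in> borel_measurable \<gamma>" for n
      by measurable
    show "(\<lambda>z. if n = 0 then z else (fst z, b (n mod m))) \<in> measurable \<gamma> (borel \<Otimes>\<^sub>M borel)" for n
      by (cases "n = 0") (simp_all add: measurable_cong_sets[OF sets refl])
  qed (simp_all add: sum.atMost_shift f)
  moreover have "(\<integral>\<^sup>+ z. f z \<partial>\<gamma>) = ?W0 + (\<Sum>l<m. \<integral>\<^sup>+ z. w l z * f z \<partial>\<gamma>)"
  proof -
    have "(\<integral>\<^sup>+ z. f z \<partial>\<gamma>) = (\<integral>\<^sup>+ z. (1 - (\<Sum>l<m. w l z)) * f z + (\<Sum>l<m. w l z * f z) \<partial>\<gamma>)"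
      by (intro nn_integral_cong)
        (simp add: sum_distrib_right[symmetric] distrib_right[symmetric] diff_add_cancel_ennreal w_le)
    also have "\<dots> = ?W0 + (\<Sum>l<m. \<integral>\<^sup>+ z. w l z * f z \<partial>\<gamma>)"
      by (simp add: nn_integral_add nn_integral_sum)
    finally show ?thesis .
  qed
  ultimately show ?thesis by (simp add: ac_simps)
qed

lemma distr_cyclic_transfer:
  fixes \<gamma> :: "('a::topological_space \<times> 'b::topological_space) measure"
  assumes fin: "finite_measure \<gamma>" and sets: "sets \<gamma> = sets (borel \<Otimes>\<^sub>M borel)"
    and w: "\<And>l. w l \<in> borel_measurable \<gamma>" and w_le: "\<And>z. (\<Sum>l<m. w l z) \<le> 1"
    and supp: "\<And>l z. l < m \<Longrightarrow> w l z \<noteq> 0 \<Longrightarrow> snd z = b l"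
    and mass: "\<And>l. l < m \<Longrightarrow> (\<integral>\<^sup>+ z. w l z \<partial>\<gamma>) = \<delta>"
  shows "distr (cyclic_transfer \<gamma> m w b) borel fst = distr \<gamma> borel fst"
    and "distr (cyclic_transfer \<gamma> m w b) borel snd = distr \<gamma> borel snd"
proof -
  let ?\<gamma>' = "cyclic_transfer \<gamma> m w b"
  note w[measurable]
  have preserved: "(\<integral>\<^sup>+ z. g z \<partial>?\<gamma>') = (\<integral>\<^sup>+ z. g z \<partial>\<gamma>)"
    if g: "g \<in> borel_measurable (borel \<Otimes>\<^sub>M borel)" and g_le: "\<And>z. g z \<le> 1"
      and same: "(\<Sum>l<m. \<integral>\<^sup>+ z. w l z * g z \<partial>\<gamma>) = (\<Sum>l<m. \<integral>\<^sup>+ z. w l z * g (fst z, b (Suc l mod m)) \<partial>\<gamma>)"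
    for g
  proof -
    have "(\<integral>\<^sup>+ z. w l z * g z \<partial>\<gamma>) \<noteq> \<top>" if "l < m" for l
    proof (rule neq_top_trans[OF finite_measure.emeasure_finite[OF fin, of "space \<gamma>"]])
      have "w l z * g z \<le> 1" for z
        using mult_mono[OF order.trans[OF member_le_sum w_le] g_le] that by simp
      then have "(\<integral>\<^sup>+ z. w l z * g z \<partial>\<gamma>) \<le> (\<integral>\<^sup>+ z. 1 \<partial>\<gamma>)" by (intro nn_integral_mono) simp
      then show "(\<integral>\<^sup>+ z. w l z * g z \<partial>\<gamma>) \<le> emeasure \<gamma> (space \<gamma>)" by simp
    qed
    then have "(\<Sum>l<m. \<integral>\<^sup>+ z. w l z * g z \<partial>\<gamma>) \<noteq> \<top>" by simp
    then show ?thesis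
      using nn_integral_cyclic_transfer[OF sets w w_le g, of b] same by (simp add: ennreal_add_left_cancel add.commute)
  qed
  have emeasure_distr_eq: "emeasure (distr M borel h) A = (\<integral>\<^sup>+ z. indicator A (h z) \<partial>M)"
    if "sets M = sets (borel \<Otimes>\<^sub>M borel)" "h \<in> borel \<Otimes>\<^sub>M borel \<rightarrow>\<^sub>M borel" "A \<in> sets borel"
    for M :: "('a \<times> 'b) measure" and h :: "'a \<times> 'b \<Rightarrow> 'c::topological_space" and A
    using that by (simp add: nn_integral_distr[symmetric] measurable_cong_sets[OF that(1) refl])
  show "distr ?\<gamma>' borel fst = distr \<gamma> borel fst"
  proof (rule measure_eqI)
    fix A :: "'a set" assume "A \<in> sets (distr ?\<gamma>' borel fst)"
    then have [measurable]: "A \<in> sets borel" by simp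
    have "(\<integral>\<^sup>+ z. indicator A (fst z) \<partial>?\<gamma>') = (\<integral>\<^sup>+ z. indicator A (fst z) \<partial>\<gamma>)"
      by (rule preserved) (auto simp: indicator_def)
    then show "emeasure (distr ?\<gamma>' borel fst) A = emeasure (distr \<gamma> borel fst) A"
      using sets by (simp add: emeasure_distr_eq)
  qed simp
  show "distr ?\<gamma>' borel snd = distr \<gamma> borel snd"
  proof (rule measure_eqI)
    fix A :: "'b set" assume "A \<in> sets (distr ?\<gamma>' borel snd)"
    then have [measurable]: "A \<in> sets borel" by simp
    have moved: "(\<integral>\<^sup>+ z. w l z * indicator A c \<partial>\<gamma>) = \<delta> * indicator A c" if "l < m" for l c
      using mass[OF that] by (simp add: nn_integral_multc)
    have "(\<integral>\<^sup>+ z. w l z * indicator A (snd z) \<partial>\<gamma>) = \<delta> * indicator A (b l)" if "l < m" for l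
    proof -
      have "(\<integral>\<^sup>+ z. w l z * indicator A (snd z) \<partial>\<gamma>) = (\<integral>\<^sup>+ z. w l z * indicator A (b l) \<partial>\<gamma>)"
        by (intro nn_integral_cong) (metis supp[OF that] mult_zero_left)
      then show ?thesis using moved[OF that] by simp
    qed
    then have "(\<Sum>l<m. \<integral>\<^sup>+ z. w l z * indicator A (snd z) \<partial>\<gamma>)
        = (\<Sum>l<m. \<integral>\<^sup>+ z. w l z * indicator A (snd (fst z, b (Suc l mod m))) \<partial>\<gamma>)"
      using sum_lessThan_rotate[of "\<lambda>l. \<delta> * indicator A (b l)" m] by (simp add: moved)
    then have "(\<integral>\<^sup>+ z. indicator A (snd z) \<partial>?\<gamma>') = (\<integral>\<^sup>+ z. indicator A (snd z) \<partial>\<gamma>)"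
      by (intro preserved) (auto simp: indicator_def)
    then show "emeasure (distr ?\<gamma>' borel snd) A = emeasure (distr \<gamma> borel snd) A"
      using sets by (simp add: emeasure_distr_eq)
  qed simp
qed

lemma vertex_nth: "vertex i $ k = (if k = i then 1 else 0)"
  by (simp add: vertex_def axis_def)

lemma vertex_eq_iff: "vertex i = vertex j \<longleftrightarrow> i = j"
  by (simp add: vertex_def axis_eq_axis)

lemma closed_std_simplex: "closed (std_simplex :: (real^'n::finite) set)"
proof -
  have "std_simplex = {x::real^'n. \<forall>i. 0 \<le> x$i} \<inter> {x. (\<Sum>i\<in>UNIV. x $ i) = 1}"
    by (auto simp: std_simplex_def)
  also have "closed \<dots>"
    by (intro closed_Int closed_positive_orthant closed_Collect_eq continuous_intros)
  finally show ?thesis .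
qed

lemma std_simplex_borel: "std_simplex \<in> sets borel"
  by (rule borel_closed[OF closed_std_simplex])

lemma std_simplex_bounds: assumes "x \<in> std_simplex" shows "0 \<le> x$i" "x$i \<le> 1"
proof -
  show "0 \<le> x$i" using assms by (auto simp: std_simplex_def)
  have "x$i \<le> (\<Sum>k\<in>UNIV. x$k)" using assms by (intro member_le_sum) (auto simp: std_simplex_def)
  then show "x$i \<le> 1" using assms by (auto simp: std_simplex_def)
qed

lemma l1_cost_vertex: assumes "x \<in> std_simplex" shows "l1_cost x (vertex i) = 2 - 2 * x$i"
proof -
  have "l1_cost x (vertex i) = (\<Sum>k\<in>UNIV. x$k + (if k = i then 1 - 2 * x$k else 0))"
    unfolding l1_cost_def vertex_nth
    by (intro sum.cong refl) (use std_simplex_bounds[OF assms] in auto)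
  also have "\<dots> = (\<Sum>k\<in>UNIV. x$k) + (1 - 2 * x$i)" by (simp add: sum.distrib)
  finally show ?thesis using assms by (simp add: std_simplex_def)
qed

lemma borel_measurable_l1_cost: "(\<lambda>z::((real^'n::finite) \<times> (real^'n)). l1_cost (fst z) (snd z)) \<in> borel_measurable borel"
  unfolding l1_cost_def by (intro borel_measurable_continuous_onI continuous_intros)

locale ot_setting =
  fixes p q :: "(real^'n::finite) measure" and \<gamma> :: "((real^'n) \<times> (real^'n)) measure"
  assumes p_simplex: "prob_space p" "sets p = sets borel" "emeasure p std_simplex = 1"
    and q_vertices: "prob_space q" "sets q = sets borel" "emeasure q (range vertex) = 1"
    and optimal: "optimal_coupling p q \<gamma>"
begin

lemma coupling: "prob_space \<gamma>" "sets \<gamma> = sets (borel \<Otimes>\<^sub>M borel)" "distr \<gamma> borel fst = p" "distr \<gamma> borel snd = q"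
  using optimal by (auto simp: optimal_coupling_def is_coupling_def)

lemma sets_coupling: "sets \<gamma> = sets borel"
proof -
  have "sets (borel \<Otimes>\<^sub>M borel) = sets (borel :: ((real^'n) \<times> (real^'n)) measure)"
    by (rule arg_cong[OF borel_prod])
  then show ?thesis using coupling(2) by simp
qed

lemma Times_in_sets_coupling: "A \<in> sets borel \<Longrightarrow> B \<in> sets borel \<Longrightarrow> A \<times> B \<in> sets \<gamma>"
  unfolding coupling(2) by (rule pair_measureI)

lemma space_coupling: "space \<gamma> = UNIV" using sets_eq_imp_space_eq[OF sets_coupling] by simp

lemma finite_coupling: "finite_measure \<gamma>" using coupling(1) by (simp add: prob_space_def)

lemma emeasure_coupling_UNIV_Times: assumes "A \<in> sets borel" shows "emeasure \<gamma> (UNIV \<times> A) = emeasure q A"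
proof -
  have sm: "snd \<in> measurable \<gamma> borel"
    unfolding measurable_cong_sets[OF coupling(2) refl] by (rule measurable_snd)
  have "emeasure q A = emeasure (distr \<gamma> borel snd) A" using coupling(4) by simp
  also have "\<dots> = emeasure \<gamma> (snd -` A \<inter> space \<gamma>)" by (rule emeasure_distr[OF sm assms])
  also have "snd -` A \<inter> space \<gamma> = UNIV \<times> A" by (auto simp: space_coupling)
  finally show ?thesis ..
qed

lemma emeasure_coupling_Times_UNIV: assumes "A \<in> sets borel" shows "emeasure \<gamma> (A \<times> UNIV) = emeasure p A"
proof -
  have sm: "fst \<in> measurable \<gamma> borel"
    unfolding measurable_cong_sets[OF coupling(2) refl] by (rule measurable_fst)
  have "emeasure p A = emeasure (distr \<gamma> borel fst) A" using coupling(3) by simp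
  also have "\<dots> = emeasure \<gamma> (fst -` A \<inter> space \<gamma>)" by (rule emeasure_distr[OF sm assms])
  also have "fst -` A \<inter> space \<gamma> = A \<times> UNIV" by (auto simp: space_coupling)
  finally show ?thesis ..
qed

lemma range_vertex_borel: "range vertex \<in> sets borel"
  by (intro borel_closed finite_imp_closed) auto

lemma vertex_borel: "{vertex i} \<in> sets borel"
  by (intro borel_closed closed_singleton)

lemma null_outside_simplex: "(UNIV - std_simplex) \<times> UNIV \<in> null_sets \<gamma>"
proof -
  have sp: "space p = UNIV" using sets_eq_imp_space_eq[OF p_simplex(2)] by simp
  have "emeasure p (UNIV - std_simplex) = emeasure p UNIV - emeasure p std_simplex"
    using p_simplex(2,3) by (intro emeasure_Diff) (auto simp: std_simplex_borel)
  also have "emeasure p UNIV = 1" using prob_space.emeasure_space_1[OF p_simplex(1)] sp by simp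
  finally have "emeasure p (UNIV - std_simplex) = 0" using p_simplex(3) by simp
  moreover have Sb: "UNIV - std_simplex \<in> sets borel"
    using borel_open[OF open_Diff[OF open_UNIV closed_std_simplex]] .
  ultimately show ?thesis
    using emeasure_coupling_Times_UNIV[OF Sb] Times_in_sets_coupling[OF Sb sets.top[of borel, unfolded space_borel]]
    by (intro null_setsI) simp_all
qed

lemma null_outside_vertices: "UNIV \<times> (UNIV - range vertex) \<in> null_sets \<gamma>"
proof -
  have sp: "space q = UNIV" using sets_eq_imp_space_eq[OF q_vertices(2)] by simp
  have "emeasure q (UNIV - range vertex) = emeasure q UNIV - emeasure q (range vertex)"
    using q_vertices(2,3) by (intro emeasure_Diff) (auto simp: range_vertex_borel)
  also have "emeasure q UNIV = 1" using prob_space.emeasure_space_1[OF q_vertices(1)] sp by simp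
  finally have "emeasure q (UNIV - range vertex) = 0" using q_vertices(3) by simp
  moreover have Sb: "UNIV - range vertex \<in> sets borel"
    by (intro borel_open open_Diff open_UNIV finite_imp_closed) auto
  ultimately show ?thesis
    using emeasure_coupling_UNIV_Times[OF Sb] Times_in_sets_coupling[OF sets.top[of borel, unfolded space_borel] Sb]
    by (intro null_setsI) simp_all
qed

lemma AE_coupling_support: "AE z in \<gamma>. fst z \<in> std_simplex \<and> snd z \<in> range vertex"
  by (rule AE_I'[OF null_sets.Un[OF null_outside_simplex null_outside_vertices]]) auto

lemma measure_simplex_Times_vertex: "measure \<gamma> (std_simplex \<times> {vertex i}) = measure q {vertex i}"
proof -
  have "std_simplex \<times> {vertex i} = UNIV \<times> {vertex i} - (UNIV - std_simplex) \<times> UNIV" by auto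
  moreover have "emeasure \<gamma> (UNIV \<times> {vertex i} - (UNIV - std_simplex) \<times> UNIV) = emeasure \<gamma> (UNIV \<times> {vertex i})"
    by (rule emeasure_Diff_null_set[OF null_outside_simplex Times_in_sets_coupling[OF sets.top[of borel, unfolded space_borel] vertex_borel]])
  ultimately have "emeasure \<gamma> (std_simplex \<times> {vertex i}) = emeasure \<gamma> (UNIV \<times> {vertex i})" by metis
  also have "\<dots> = emeasure q {vertex i}" by (rule emeasure_coupling_UNIV_Times[OF vertex_borel])
  finally show ?thesis by (simp add: measure_def)
qed

lemma measure_Times_vertex_le: "measure \<gamma> (A \<times> {vertex i}) \<le> measure q {vertex i}"
proof -
  have "measure \<gamma> (A \<times> {vertex i}) \<le> measure \<gamma> (UNIV \<times> {vertex i})"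
    using Times_in_sets_coupling[OF _ vertex_borel, of UNIV] by (intro finite_measure.finite_measure_mono[OF finite_coupling]) auto
  also have "\<dots> = measure q {vertex i}" using emeasure_coupling_UNIV_Times[OF vertex_borel] by (simp add: measure_def)
  finally show ?thesis .
qed

definition sublevel :: "'n \<Rightarrow> 'n \<Rightarrow> real \<Rightarrow> (real^'n) set" where
  "sublevel i j b = {x \<in> std_simplex. x$j - x$i \<le> b - 1}"

definition full_levels :: "'n \<Rightarrow> 'n \<Rightarrow> real set" where
  "full_levels i j = {b. measure \<gamma> (sublevel i j b \<times> {vertex i}) = measure q {vertex i}}"

lemma B_thr_eq: "B_thr \<gamma> q i j = real_of_ereal (max 0 (Inf (ereal ` full_levels i j)))"
  by (simp add: B_thr_def full_levels_def sublevel_def)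

lemma sublevel_borel: "sublevel i j b \<in> sets borel"
proof -
  have "sublevel i j b = std_simplex \<inter> {x. x$j - x$i \<le> b - 1}" by (auto simp: sublevel_def)
  also have "\<dots> \<in> sets borel"
    by (intro borel_closed closed_Int closed_std_simplex closed_Collect_le continuous_intros)
  finally show ?thesis .
qed

lemma full_levels_upclosed: assumes "b \<in> full_levels i j" "b \<le> b'" shows "b' \<in> full_levels i j"
proof -
  have "measure q {vertex i} = measure \<gamma> (sublevel i j b \<times> {vertex i})" using assms by (simp add: full_levels_def)
  also have "\<dots> \<le> measure \<gamma> (sublevel i j b' \<times> {vertex i})"
    using Times_in_sets_coupling[OF sublevel_borel vertex_borel] assms(2)
    by (intro finite_measure.finite_measure_mono[OF finite_coupling]) (auto simp: sublevel_def)
  finally show ?thesis using measure_Times_vertex_le[of "sublevel i j b'" i] by (simp add: full_levels_def)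
qed

lemma two_in_full_levels: "2 \<in> full_levels i j"
proof -
  have "x$j - x$i \<le> 1" if "x \<in> std_simplex" for x
    using std_simplex_bounds[OF that, of j] std_simplex_bounds[OF that, of i] by linarith
  then have "sublevel i j 2 = std_simplex" by (auto simp: sublevel_def)
  then show ?thesis using measure_simplex_Times_vertex by (simp add: full_levels_def)
qed

lemma B_thr_props: "0 \<le> B_thr \<gamma> q i j" "B_thr \<gamma> q i j \<le> 2"
  "0 < B_thr \<gamma> q i j \<Longrightarrow> b < B_thr \<gamma> q i j \<Longrightarrow> b \<notin> full_levels i j"
  "B_thr \<gamma> q i j < b \<Longrightarrow> b \<in> full_levels i j"
proof -
  have up: "\<And>b b'. b \<in> full_levels i j \<Longrightarrow> b \<le> b' \<Longrightarrow> b' \<in> full_levels i j" by (rule full_levels_upclosed)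
  note th = threshold_props[of "full_levels i j", OF up two_in_full_levels]
  show "0 \<le> B_thr \<gamma> q i j" unfolding B_thr_eq by (rule th(1))
  show "B_thr \<gamma> q i j \<le> 2" unfolding B_thr_eq by (rule th(2))
  show "0 < B_thr \<gamma> q i j \<Longrightarrow> b < B_thr \<gamma> q i j \<Longrightarrow> b \<notin> full_levels i j"
    unfolding B_thr_eq by (rule th(3))
  show "B_thr \<gamma> q i j < b \<Longrightarrow> b \<in> full_levels i j" unfolding B_thr_eq by (rule th(4))
qed

lemma strict_gap_borel: "{x \<in> std_simplex. t < x $ j - x $ i} \<in> sets borel"
proof -
  have "{x \<in> std_simplex. t < x $ j - x $ i} = std_simplex \<inter> {x. t < x $ j - x $ i}" by auto
  also have "\<dots> \<in> sets borel"
    by (intro sets.Int std_simplex_borel borel_open open_Collect_less continuous_intros)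
  finally show ?thesis .
qed

lemma B_thr_mass_near:
  assumes "0 < measure q {vertex i}" "0 < \<epsilon>"
  shows "0 < measure \<gamma> ({x \<in> std_simplex. B_thr \<gamma> q i j - 1 - \<epsilon> < x$j - x$i} \<times> {vertex i})"
proof -
  let ?B = "B_thr \<gamma> q i j"
  define E where "E = {x \<in> std_simplex. ?B - 1 - \<epsilon> < x$j - x$i}"
  have "0 < measure \<gamma> (E \<times> {vertex i})"
  proof (rule ccontr)
    assume "\<not> 0 < measure \<gamma> (E \<times> {vertex i})"
    then have E0: "measure \<gamma> (E \<times> {vertex i}) = 0"
      using measure_nonneg[of \<gamma> "E \<times> {vertex i}"] by linarith
    have Eb: "E \<in> sets borel" unfolding E_def by (rule strict_gap_borel)
    have un: "std_simplex \<times> {vertex i} = sublevel i j (?B - \<epsilon>) \<times> {vertex i} \<union> E \<times> {vertex i}"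
      by (auto simp: sublevel_def E_def)
    have dj: "(sublevel i j (?B - \<epsilon>) \<times> {vertex i}) \<inter> (E \<times> {vertex i}) = {}"
      by (auto simp: sublevel_def E_def)
    have "measure \<gamma> (std_simplex \<times> {vertex i}) = measure \<gamma> (sublevel i j (?B - \<epsilon>) \<times> {vertex i}) + measure \<gamma> (E \<times> {vertex i})"
      unfolding un by (rule finite_measure.finite_measure_Union[OF finite_coupling Times_in_sets_coupling[OF sublevel_borel vertex_borel] Times_in_sets_coupling[OF Eb vertex_borel] dj])
    then have inX: "?B - \<epsilon> \<in> full_levels i j" using E0 measure_simplex_Times_vertex by (simp add: full_levels_def)
    show False
    proof (cases "0 < ?B")
      case True
      then show False using B_thr_props(3)[of i j "?B - \<epsilon>"] inX assms by simp
    next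
      case False
      then have "?B = 0" using B_thr_props(1)[of i j] by simp
      moreover have "-1 \<le> x$j - x$i" if "x \<in> std_simplex" for x
        using std_simplex_bounds[OF that, of j] std_simplex_bounds[OF that, of i] by linarith
      ultimately have "E = std_simplex" using assms(2) unfolding E_def by force
      then show False using E0 measure_simplex_Times_vertex assms(1) by simp
    qed
  qed
  then show ?thesis by (simp add: E_def)
qed

lemma B_thr_null_vertex: assumes "measure q {vertex i} = 0" shows "B_thr \<gamma> q i j = 0"
proof (rule ccontr)
  assume "B_thr \<gamma> q i j \<noteq> 0"
  then have pos: "0 < B_thr \<gamma> q i j" using B_thr_props(1)[of i j] by simp
  have "0 \<in> full_levels i j" using measure_Times_vertex_le[of "sublevel i j 0" i] assms measure_nonneg[of \<gamma> "sublevel i j 0 \<times> {vertex i}"]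
    by (simp add: full_levels_def)
  then show False using B_thr_props(3)[OF pos, of 0] pos by simp
qed

lemma B_thr_triangle: "B_thr \<gamma> q i j \<le> B_thr \<gamma> q i k + 1"
proof (rule ccontr)
  let ?Bj = "B_thr \<gamma> q i j" and ?Bk = "B_thr \<gamma> q i k"
  assume neg: "\<not> ?thesis"
  define b where "b = (?Bj + ?Bk + 1) / 2"
  have "b - 1 \<in> full_levels i k" using B_thr_props(4)[of i k "b - 1"] neg by (simp add: b_def)
  have "b \<in> full_levels i j"
  proof -
    have "measure q {vertex i} = measure \<gamma> (sublevel i k (b - 1) \<times> {vertex i})"
      using \<open>b - 1 \<in> full_levels i k\<close> by (simp add: full_levels_def)
    also have "\<dots> \<le> measure \<gamma> (sublevel i j b \<times> {vertex i})"
    proof (intro finite_measure.finite_measure_mono[OF finite_coupling] Times_in_sets_coupling sublevel_borel vertex_borel)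
      have "x$j - x$i \<le> b - 1" if "x \<in> std_simplex" "x$k - x$i \<le> b - 2" for x
        using std_simplex_bounds[OF that(1), of j] std_simplex_bounds[OF that(1), of k] that(2) by linarith
      then show "sublevel i k (b - 1) \<times> {vertex i} \<subseteq> sublevel i j b \<times> {vertex i}" by (auto simp: sublevel_def)
    qed
    finally show ?thesis using measure_Times_vertex_le[of "sublevel i j b" i] by (simp add: full_levels_def)
  qed
  moreover have "0 < ?Bj" using neg B_thr_props(1)[of i k] by simp
  ultimately show False using B_thr_props(3)[of i j b] neg by (simp add: b_def)
qed

lemma borel_measurable_fst_component [measurable]: "(\<lambda>z. fst z $ k) \<in> borel_measurable \<gamma>"
  unfolding measurable_cong_sets[OF sets_coupling refl]
  by (intro borel_measurable_continuous_onI continuous_intros)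

lemma nn_integral_l1_cost_finite: "(\<integral>\<^sup>+ z. ennreal (l1_cost (fst z) (snd z)) \<partial>\<gamma>) \<noteq> \<top>"
proof -
  have "(\<integral>\<^sup>+ z. ennreal (l1_cost (fst z) (snd z)) \<partial>\<gamma>) \<le> (\<integral>\<^sup>+ z. 2 \<partial>\<gamma>)"
    using AE_coupling_support
  proof (intro nn_integral_mono_AE, eventually_elim)
    fix z :: "(real^'n) \<times> (real^'n)" assume "fst z \<in> std_simplex \<and> snd z \<in> range vertex"
    then obtain i where z: "fst z \<in> std_simplex" "snd z = vertex i" by auto
    then show "ennreal (l1_cost (fst z) (snd z)) \<le> 2"
      using l1_cost_vertex[OF z(1), of i] std_simplex_bounds[OF z(1), of i] ennreal_leI[of "2 - 2 * fst z $ i" 2]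
      by simp
  qed
  also have "\<dots> = 2" using prob_space.emeasure_space_1[OF coupling(1)] by simp
  finally show ?thesis by (metis ennreal_numeral infinity_ennreal_def neq_top_trans top_neq_ennreal)
qed

lemma optimal_cyclic_transfer:
  assumes w: "\<And>l. w l \<in> borel_measurable \<gamma>" and w_le: "\<And>z. (\<Sum>l<m. w l z) \<le> 1"
    and supp: "\<And>l z. l < m \<Longrightarrow> w l z \<noteq> 0 \<Longrightarrow> snd z = b l"
    and mass: "\<And>l. l < m \<Longrightarrow> (\<integral>\<^sup>+ z. w l z \<partial>\<gamma>) = \<delta>"
  shows "(\<Sum>l<m. \<integral>\<^sup>+ z. w l z * ennreal (l1_cost (fst z) (snd z)) \<partial>\<gamma>)
       \<le> (\<Sum>l<m. \<integral>\<^sup>+ z. w l z * ennreal (l1_cost (fst z) (b (Suc l mod m))) \<partial>\<gamma>)"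
proof -
  let ?\<gamma>' = "cyclic_transfer \<gamma> m w b"
  let ?c = "\<lambda>z. ennreal (l1_cost (fst z) (snd z))"
  have marginals: "distr ?\<gamma>' borel fst = p" "distr ?\<gamma>' borel snd = q"
    using distr_cyclic_transfer[OF finite_coupling coupling(2) w w_le supp mass] coupling(3,4) by auto
  have "prob_space ?\<gamma>'"
  proof (rule prob_spaceI)
    have "fst \<in> measurable ?\<gamma>' borel"
      unfolding measurable_cong_sets[OF sets_cyclic_transfer refl] by (rule measurable_fst)
    then have "emeasure ?\<gamma>' (space ?\<gamma>') = emeasure (distr ?\<gamma>' borel fst) (space p)"
      using sets_eq_imp_space_eq[OF p_simplex(2)] by (simp add: emeasure_distr)
    then show "emeasure ?\<gamma>' (space ?\<gamma>') = 1"
      using marginals prob_space.emeasure_space_1[OF p_simplex(1)] by simp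
  qed
  then have "is_coupling p q ?\<gamma>'" using marginals by (simp add: is_coupling_def)
  then have "(\<integral>\<^sup>+ z. ?c z \<partial>\<gamma>) \<le> (\<integral>\<^sup>+ z. ?c z \<partial>?\<gamma>')"
    using optimal unfolding optimal_coupling_def by blast
  then have "(\<integral>\<^sup>+ z. ?c z \<partial>\<gamma>) + (\<Sum>l<m. \<integral>\<^sup>+ z. w l z * ?c z \<partial>\<gamma>)
      \<le> (\<integral>\<^sup>+ z. ?c z \<partial>?\<gamma>') + (\<Sum>l<m. \<integral>\<^sup>+ z. w l z * ?c z \<partial>\<gamma>)"
    by (rule add_right_mono)
  also have "\<dots> = (\<integral>\<^sup>+ z. ?c z \<partial>\<gamma>)
      + (\<Sum>l<m. \<integral>\<^sup>+ z. w l z * ennreal (l1_cost (fst z) (b (Suc l mod m))) \<partial>\<gamma>)"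
  proof -
    have "?c \<in> borel_measurable (borel \<Otimes>\<^sub>M borel)"
      unfolding borel_prod using borel_measurable_l1_cost by measurable
    from nn_integral_cyclic_transfer[OF coupling(2) w w_le this, of b] show ?thesis by simp
  qed
  finally show ?thesis
    using nn_integral_l1_cost_finite by (simp add: ennreal_add_left_cancel_le)
qed

lemma integrable_indicator_vertex_cost:
  assumes "F \<in> sets \<gamma>" "F \<subseteq> std_simplex \<times> UNIV"
  shows "integrable \<gamma> (\<lambda>z. indicator F z * (2 - 2 * fst z $ k))"
proof (rule finite_measure.integrable_const_bound[OF finite_coupling, where B=2])
  show "AE z in \<gamma>. norm (indicator F z * (2 - 2 * fst z $ k)) \<le> (2::real)"
  proof (rule AE_I2)
    fix z show "norm (indicator F z * (2 - 2 * fst z $ k)) \<le> (2::real)"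
      using assms(2) std_simplex_bounds[of "fst z" k] by (cases "z \<in> F") auto
  qed
qed (use assms(1) in measurable)

lemma nn_integral_indicator_l1_cost_vertex:
  assumes F: "F \<in> sets \<gamma>" "F \<subseteq> std_simplex \<times> UNIV" and "0 \<le> r"
  shows "(\<integral>\<^sup>+ z. ennreal (r * indicator F z) * ennreal (l1_cost (fst z) (vertex k)) \<partial>\<gamma>)
       = ennreal (r * (\<integral>z. indicator F z * (2 - 2 * fst z $ k) \<partial>\<gamma>))"
proof -
  have "ennreal (r * indicator F z) * ennreal (l1_cost (fst z) (vertex k))
      = ennreal (r * (indicator F z * (2 - 2 * fst z $ k)))" for z
    using F(2) l1_cost_vertex[of "fst z" k] \<open>0 \<le> r\<close> by (cases "z \<in> F") (auto simp: ennreal_mult')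
  moreover have "AE z in \<gamma>. 0 \<le> r * (indicator F z * (2 - 2 * fst z $ k))"
    using F(2) std_simplex_bounds[of _ k] \<open>0 \<le> r\<close> by (intro AE_I2) (auto simp: indicator_def)
  ultimately show ?thesis
    using integrable_mult_right[OF integrable_indicator_vertex_cost[OF F]]
    by (simp add: nn_integral_eq_integral)
qed

lemma integral_indicator_vertex_cost_nonneg:
  assumes "F \<subseteq> std_simplex \<times> UNIV"
  shows "0 \<le> (\<integral>z. indicator F z * (2 - 2 * fst z $ k) \<partial>\<gamma>)"
  using assms std_simplex_bounds[of _ k] by (intro integral_nonneg_AE AE_I2) (auto simp: indicator_def)

lemma integral_indicator_vertex_gap:
  assumes F: "F \<in> sets \<gamma>" "F \<subseteq> {x \<in> std_simplex. t < x $ j - x $ i} \<times> UNIV"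
  shows "(\<integral>z. indicator F z * (2 - 2 * fst z $ j) \<partial>\<gamma>) + 2 * t * measure \<gamma> F
       \<le> (\<integral>z. indicator F z * (2 - 2 * fst z $ i) \<partial>\<gamma>)"
proof -
  have F': "F \<subseteq> std_simplex \<times> UNIV" using F(2) by auto
  note int_j = integrable_indicator_vertex_cost[OF F(1) F', of j]
  note int_i = integrable_indicator_vertex_cost[OF F(1) F', of i]
  have int_F: "integrable \<gamma> (\<lambda>z. 2 * t * indicator F z)"
    using F(1) finite_measure.emeasure_finite[OF finite_coupling, of F]
    by (intro integrable_mult_right integrable_real_indicator) (auto simp: less_top)
  have "(\<integral>z. 2 * t * indicator F z \<partial>\<gamma>) = 2 * t * measure \<gamma> F"
    using F(1) by (simp add: space_coupling)
  then have "(\<integral>z. indicator F z * (2 - 2 * fst z $ j) \<partial>\<gamma>) + 2 * t * measure \<gamma> F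
      = (\<integral>z. indicator F z * (2 - 2 * fst z $ j) + 2 * t * indicator F z \<partial>\<gamma>)"
    using Bochner_Integration.integral_add[OF int_j int_F] by (simp add: space_coupling)
  also have "\<dots> \<le> (\<integral>z. indicator F z * (2 - 2 * fst z $ i) \<partial>\<gamma>)"
  proof (rule integral_mono[OF Bochner_Integration.integrable_add[OF int_j int_F] int_i])
    fix z
    have "t < fst z $ j - fst z $ i" if "z \<in> F"
      using subsetD[OF F(2) that] by (cases z) simp
    then show "indicator F z * (2 - 2 * fst z $ j) + 2 * t * indicator F z \<le> indicator F z * (2 - 2 * fst z $ i)"
      by (cases "z \<in> F") simp_all
  qed
  finally show ?thesis .
qed


lemma optimal_weighted_cycle:
  assumes dist: "distinct vs"
    and F: "\<And>l. F l \<in> sets \<gamma>" "\<And>l. F l \<subseteq> std_simplex \<times> {vertex (vs ! l)}"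
    and r: "\<And>l. l < length vs \<Longrightarrow> 0 \<le> r l \<and> r l \<le> 1 \<and> r l * measure \<gamma> (F l) = \<delta>"
  defines "m \<equiv> length vs"
  shows "(\<Sum>l<m. r l * (\<integral>z. indicator (F l) z * (2 - 2 * fst z $ (vs ! l)) \<partial>\<gamma>))
       \<le> (\<Sum>l<m. r l * (\<integral>z. indicator (F l) z * (2 - 2 * fst z $ (vs ! (Suc l mod m))) \<partial>\<gamma>))"
    (is "(\<Sum>l<m. r l * ?X l) \<le> (\<Sum>l<m. r l * ?Y l)")
proof -
  note F(1)[measurable]
  have F_simplex: "F l \<subseteq> std_simplex \<times> UNIV" for l using F(2)[of l] by auto
  define w where "w l z = ennreal (r l * indicator (F l) z)" for l z
  have X_nonneg: "0 \<le> r l * ?X l" and Y_nonneg: "0 \<le> r l * ?Y l" if "l < m" for l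
    using r[OF that[unfolded m_def]] integral_indicator_vertex_cost_nonneg[OF F_simplex] by simp_all
  have "ennreal (\<Sum>l<m. r l * ?X l) = (\<Sum>l<m. ennreal (r l * ?X l))"
    using X_nonneg by (intro sum_ennreal[symmetric]) simp
  also have "\<dots> = (\<Sum>l<m. \<integral>\<^sup>+ z. w l z * ennreal (l1_cost (fst z) (snd z)) \<partial>\<gamma>)"
  proof (intro sum.cong refl)
    fix l assume l: "l \<in> {..<m}"
    have "(\<integral>\<^sup>+ z. w l z * ennreal (l1_cost (fst z) (snd z)) \<partial>\<gamma>)
        = (\<integral>\<^sup>+ z. ennreal (r l * indicator (F l) z) * ennreal (l1_cost (fst z) (vertex (vs ! l))) \<partial>\<gamma>)"
      using F(2)[of l] by (intro nn_integral_cong) (auto simp: w_def indicator_def)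
    then show "ennreal (r l * ?X l) = (\<integral>\<^sup>+ z. w l z * ennreal (l1_cost (fst z) (snd z)) \<partial>\<gamma>)"
      using r l by (simp add: m_def nn_integral_indicator_l1_cost_vertex[OF F(1) F_simplex])
  qed
  also have "\<dots> \<le> (\<Sum>l<m. \<integral>\<^sup>+ z. w l z * ennreal (l1_cost (fst z) (vertex (vs ! (Suc l mod m)))) \<partial>\<gamma>)"
  proof (rule optimal_cyclic_transfer[where b="\<lambda>l. vertex (vs ! l)" and \<delta>=\<delta>])
    have "F l \<inter> F l' = {}" if "l < m" "l' < m" "l \<noteq> l'" for l l'
    proof -
      have "vertex (vs ! l) \<noteq> vertex (vs ! l')"
        using dist that by (simp add: vertex_eq_iff nth_eq_iff_index_eq m_def)
      then show ?thesis using F(2)[of l] F(2)[of l'] by blast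
    qed
    then have "disjoint_family_on F {..<m}" by (auto simp: disjoint_family_on_def)
    then show "(\<Sum>l<m. w l z) \<le> 1" for z
      unfolding w_def using r by (intro sum_weighted_indicators_le_1) (auto simp: m_def)
    show "snd z = vertex (vs ! l)" if "w l z \<noteq> 0" for l z
    proof -
      have "z \<in> F l" using that by (cases "z \<in> F l") (simp_all add: w_def)
      then show ?thesis using F(2)[of l] by auto
    qed
    show "(\<integral>\<^sup>+ z. w l z \<partial>\<gamma>) = \<delta>" if "l < m" for l
    proof -
      have r_l: "0 \<le> r l" "r l * measure \<gamma> (F l) = \<delta>" using r that by (auto simp: m_def)
      have "(\<integral>\<^sup>+ z. w l z \<partial>\<gamma>) = ennreal (r l) * emeasure \<gamma> (F l)"
        using r_l(1) by (simp add: w_def ennreal_mult' ennreal_indicator nn_integral_cmult_indicator)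
      also have "\<dots> = ennreal (r l * measure \<gamma> (F l))"
        using r_l(1) by (simp add: finite_measure.emeasure_eq_measure[OF finite_coupling] ennreal_mult')
      also have "\<dots> = \<delta>" using r_l(2) by simp
      finally show ?thesis .
    qed
  qed (simp add: w_def)
  also have "\<dots> = (\<Sum>l<m. ennreal (r l * ?Y l))"
  proof (intro sum.cong refl)
    fix l assume "l \<in> {..<m}"
    then show "(\<integral>\<^sup>+ z. w l z * ennreal (l1_cost (fst z) (vertex (vs ! (Suc l mod m)))) \<partial>\<gamma>) = ennreal (r l * ?Y l)"
      using r by (simp add: w_def m_def nn_integral_indicator_l1_cost_vertex[OF F(1) F_simplex])
  qed
  also have "\<dots> = ennreal (\<Sum>l<m. r l * ?Y l)"
    using Y_nonneg by (intro sum_ennreal) simp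
  finally show ?thesis
    using ennreal_le_iff[OF sum_nonneg[of "{..<m}" "\<lambda>l. r l * ?Y l"]] Y_nonneg by simp
qed

text \<open>Moving equal masses one step along the cycle gains at least \<open>2 \<delta> \<Sum>t\<close>.\<close>
lemma cycle_gaps_nonpos:
  assumes dist: "distinct vs" and ne: "vs \<noteq> []"
    and F: "\<And>l. F l \<in> sets \<gamma>"
      "\<And>l. F l \<subseteq> {x \<in> std_simplex. t l < x $ (vs ! (Suc l mod length vs)) - x $ (vs ! l)} \<times> {vertex (vs ! l)}"
    and pos: "\<And>l. l < length vs \<Longrightarrow> 0 < measure \<gamma> (F l)"
  shows "(\<Sum>l<length vs. t l) \<le> 0"
proof -
  define m where "m = length vs"
  define \<delta> where "\<delta> = Min ((\<lambda>l. measure \<gamma> (F l)) ` {..<m})"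
  have "\<delta> \<in> (\<lambda>l. measure \<gamma> (F l)) ` {..<m}" unfolding \<delta>_def using ne by (intro Min_in) (auto simp: m_def)
  then have \<delta>_pos: "0 < \<delta>" using pos by (auto simp: m_def)
  define r where "r l = \<delta> / measure \<gamma> (F l)" for l
  have r: "0 \<le> r l \<and> r l \<le> 1 \<and> r l * measure \<gamma> (F l) = \<delta>" if "l < m" for l
    using \<delta>_pos pos[of l] that by (auto simp: r_def \<delta>_def m_def)
  have "(\<Sum>l<m. r l * (\<integral>z. indicator (F l) z * (2 - 2 * fst z $ (vs ! (Suc l mod m))) \<partial>\<gamma>) + 2 * \<delta> * t l)
      \<le> (\<Sum>l<m. r l * (\<integral>z. indicator (F l) z * (2 - 2 * fst z $ (vs ! l)) \<partial>\<gamma>))"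
  proof (intro sum_mono)
    fix l assume "l \<in> {..<m}"
    then have r_l: "0 \<le> r l" "r l * measure \<gamma> (F l) = \<delta>" using r by auto
    have "F l \<subseteq> {x \<in> std_simplex. t l < x $ (vs ! (Suc l mod m)) - x $ (vs ! l)} \<times> UNIV"
      using F(2)[of l] by (auto simp: m_def)
    from mult_left_mono[OF integral_indicator_vertex_gap[OF F(1) this] r_l(1)]
    show "r l * (\<integral>z. indicator (F l) z * (2 - 2 * fst z $ (vs ! (Suc l mod m))) \<partial>\<gamma>) + 2 * \<delta> * t l
        \<le> r l * (\<integral>z. indicator (F l) z * (2 - 2 * fst z $ (vs ! l)) \<partial>\<gamma>)"
      unfolding r_l(2)[symmetric] by (simp add: algebra_simps)
  qed
  moreover have "F l \<subseteq> std_simplex \<times> {vertex (vs ! l)}" for l using F(2)[of l] by auto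
  note optimal_weighted_cycle[OF dist F(1) this r[unfolded m_def]]
  ultimately have "2 * \<delta> * (\<Sum>l<m. t l) \<le> 0"
    by (simp add: sum.distrib sum_distrib_left m_def)
  then show ?thesis using \<delta>_pos by (simp add: m_def mult_le_0_iff)
qed

lemma B_thr_cycle_nonpos:
  assumes dist: "distinct vs" and vs: "set vs \<subseteq> {i. 0 < measure q {vertex i}}" and m2: "2 \<le> length vs"
  shows "(\<Sum>l<length vs. B_thr \<gamma> q (vs!l) (vs!(Suc l mod length vs)) - 1) \<le> 0" (is "?s \<le> 0")
proof (rule ccontr)
  define m where "m = length vs"
  assume "\<not> ?s \<le> 0"
  then have s_pos: "0 < ?s" by simp
  have m_pos: "0 < m" using m2 unfolding m_def by linarith
  define t where "t l = B_thr \<gamma> q (vs ! l) (vs ! (Suc l mod m)) - 1 - ?s / (2 * m)" for l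
  define F where "F l = {x \<in> std_simplex. t l < x $ (vs ! (Suc l mod m)) - x $ (vs ! l)} \<times> {vertex (vs ! l)}" for l
  have "(\<Sum>l<m. t l) \<le> 0"
  proof (rule cycle_gaps_nonpos[OF dist, of F, folded m_def])
    show "vs \<noteq> []" using m_pos by (auto simp: m_def)
    show "F l \<in> sets \<gamma>" for l
      unfolding F_def by (intro Times_in_sets_coupling strict_gap_borel vertex_borel)
    show "0 < measure \<gamma> (F l)" if "l < m" for l
    proof -
      have "0 < measure q {vertex (vs ! l)}"
        using subsetD[OF vs nth_mem[of l vs]] that by (simp add: m_def)
      from B_thr_mass_near[OF this, of "?s / (2 * m)" "vs ! (Suc l mod m)"] show ?thesis
        using s_pos m_pos by (simp add: F_def t_def)
    qed
  qed (auto simp: F_def)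
  moreover have "(\<Sum>l<m. t l) = ?s - real m * (?s / (2 * m))"
    by (simp add: t_def sum_subtractf m_def)
  ultimately show False using s_pos m_pos by (simp add: field_simps)
qed

lemma positive_mass_vertex_exists: "{i. 0 < measure q {vertex i}} \<noteq> {}"
proof
  assume "{i. 0 < measure q {vertex i}} = {}"
  then have "measure q {vertex i} = 0" for i
    using measure_nonneg[of q "{vertex i}"] by (metis (mono_tags) empty_Collect_eq order_less_le)
  then have "{vertex i} \<in> null_sets q" for i
    using finite_measure.emeasure_eq_measure[OF prob_space.finite_measure[OF q_vertices(1)], of "{vertex i}"]
      vertex_borel q_vertices(2)
    by (intro null_setsI) auto
  then have "(\<Union>i. {vertex i}) \<in> null_sets q" by (intro null_sets_UN') auto
  moreover have "(\<Union>i. {vertex i}) = range vertex" by auto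
  ultimately have "range vertex \<in> null_sets q" by metis
  then show False using q_vertices(3) by (simp add: null_sets_def)
qed

definition B_cost :: "'n \<Rightarrow> 'n \<Rightarrow> real" where
  "B_cost i j = (if i = j then 0 else B_thr \<gamma> q i j - 1)"

lemma nonpos_cycles_B_cost: "nonpos_cycles B_cost {i. 0 < measure q {vertex i}}"
  unfolding nonpos_cycles_def
proof (intro allI impI, elim conjE)
  fix vs assume dist: "distinct vs" and vs: "set vs \<subseteq> {i. 0 < measure q {vertex i}}" and ne: "vs \<noteq> []"
  show "walk_weight B_cost (vs @ [hd vs]) \<le> 0"
  proof (cases "length vs = 1")
    case True
    then obtain a where "vs = [a]" by (metis One_nat_def length_0_conv length_Suc_conv)
    then show ?thesis by (simp add: B_cost_def)
  next
    case False
    then have m2: "2 \<le> length vs" using ne by (cases vs) (auto simp: Suc_le_eq)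
    have "walk_weight B_cost (vs @ [hd vs]) = (\<Sum>l<length vs. B_cost (vs!l) (vs!(Suc l mod length vs)))"
      by (rule walk_weight_cycle[OF ne])
    also have "\<dots> = (\<Sum>l<length vs. B_thr \<gamma> q (vs!l) (vs!(Suc l mod length vs)) - 1)"
    proof (intro sum.cong refl)
      fix l assume l: "l \<in> {..<length vs}"
      have "l \<noteq> Suc l mod length vs"
      proof (cases "Suc l < length vs")
        case False
        then have "Suc l = length vs" using l by auto
        then show ?thesis using m2 by simp
      qed simp
      then have "vs!l \<noteq> vs!(Suc l mod length vs)"
        using dist l ne by (simp add: nth_eq_iff_index_eq)
      then show "B_cost (vs!l) (vs!(Suc l mod length vs)) = B_thr \<gamma> q (vs!l) (vs!(Suc l mod length vs)) - 1"
        by (simp add: B_cost_def)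
    qed
    also have "\<dots> \<le> 0" by (rule B_thr_cycle_nonpos[OF dist vs m2])
    finally show ?thesis .
  qed
qed

lemma B_cost_triangle:
  assumes "j \<notin> {i. 0 < measure q {vertex i}}"
  shows "B_cost a j + B_cost j b \<le> B_cost a b"
proof -
  have "measure q {vertex j} = 0" using assms measure_nonneg[of q "{vertex j}"] by auto
  then have "B_thr \<gamma> q j b = 0" by (rule B_thr_null_vertex)
  then show ?thesis
    using B_thr_props(2)[of a j] B_thr_triangle[of a j b] by (auto simp: B_cost_def)
qed

end

theorem propositionD1:
  fixes p q :: "(real^'n::finite) measure"
    and \<gamma> :: "((real^'n) \<times> (real^'n)) measure"
  assumes "CARD('n) \<ge> 2"
    and "prob_space p" and "sets p = sets borel" and "emeasure p std_simplex = 1"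
    and "prob_space q" and "sets q = sets borel" and "emeasure q (range vertex) = 1"
    and "optimal_coupling p q \<gamma>"
  shows "(\<Inter>i\<in>UNIV. A_set \<gamma> q i) \<noteq> {}"
proof -
  interpret ot_setting p q \<gamma> using assms(2-) by (rule ot_setting.intro)
  obtain u where u: "\<And>i j. B_cost i j \<le> u i - u j"
    using potential_exists[OF nonpos_cycles_B_cost positive_mass_vertex_exists B_cost_triangle]
    by (auto simp: B_cost_def)
  define c where "c = (1 + (\<Sum>k\<in>UNIV. u k)) / real CARD('n)"
  define x :: "real^'n" where "x = (\<chi> k. c - u k)"
  have "x \<in> hyperplane_D"
    by (simp add: hyperplane_D_def x_def sum_subtractf c_def)
  moreover have "B_thr \<gamma> q i j - 1 \<le> x $ j - x $ i" if "j \<noteq> i" for i j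
    using u[of i j] that by (simp add: x_def B_cost_def)
  ultimately have "x \<in> (\<Inter>i. A_set \<gamma> q i)" by (auto simp: A_set_def)
  then show ?thesis by auto
qed

end
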